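(* Let $\mathcal{F}$ satisfy the standard conditions, let $A$ be an $\mathcal{F}$-sequence and $\alpha\in\mathbb{R}$. If $x\,|A(x)-\alpha|$ is bounded as $x$ ranges over $\mathbb{N}$, then $\alpha$ is $\mathcal{F}$-computable.
   Context: $\mathbb{N}=\{0,1,2,\dots\}$. $\mathcal{F}$ is a set of functions $\mathbb{N}^n\to\mathbb{N}$; it satisfies the standard conditions if it contains the zero function, the successor, all projections $P^n_i$, addition, multiplication and modified subtraction $x\dot- y=\max(x-y,0)$, and is closed under composition. An $\mathcal{F}$-sequence is $A:\mathbb{N}\to\mathbb{Q}$, $A(x)=\frac{f(x)-g(x)}{h(x)+1}$, with $f,g,h:\mathbb{N}\to\mathbb{N}$ in $\mathcal{F}$. A real number $\alpha$ is $\mathcal{F}$-computable if there is an $\mathcal{F}$-sequence $A$ with $|A(x)-\alpha|\le\frac1{x+1}$ for all $x\in\mathbb{N}$. *)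

theory Defs
  imports "HOL-Analysis.Analysis"
begin

text \<open>A class of functions F is modelled as a family indexed by the arity n:
  F n is a set of functions nat list \<Rightarrow> nat, of which only the values on
  lists of length n matter (an n-ary function N^n \<rightarrow> N).\<close>

type_synonym fclass = "nat \<Rightarrow> (nat list \<Rightarrow> nat) set"

definition inF :: "fclass \<Rightarrow> nat \<Rightarrow> (nat list \<Rightarrow> nat) \<Rightarrow> bool" where
  "inF F n f \<longleftrightarrow> (\<exists>g\<in>F n. \<forall>xs. length xs = n \<longrightarrow> g xs = f xs)"

definition standard_conditions :: "fclass \<Rightarrow> bool" where
  "standard_conditions F \<longleftrightarrow>
     inF F 1 (\<lambda>xs. 0) \<and>
     inF F 1 (\<lambda>xs. Suc (xs ! 0)) \<and>
     (\<forall>n i. 1 \<le> i \<and> i \<le> n \<longrightarrow> inF F n (\<lambda>xs. xs ! (i - 1))) \<and>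
     inF F 2 (\<lambda>xs. xs ! 0 + xs ! 1) \<and>
     inF F 2 (\<lambda>xs. xs ! 0 * xs ! 1) \<and>
     inF F 2 (\<lambda>xs. xs ! 0 - xs ! 1) \<and>
     (\<forall>m n f gs. inF F m f \<and> length gs = m \<and> (\<forall>g\<in>set gs. inF F n g) \<longrightarrow>
        inF F n (\<lambda>xs. f (map (\<lambda>g. g xs) gs)))"

definition unaryF :: "fclass \<Rightarrow> (nat \<Rightarrow> nat) \<Rightarrow> bool" where
  "unaryF F f \<longleftrightarrow> inF F 1 (\<lambda>xs. f (xs ! 0))"

definition F_sequence :: "fclass \<Rightarrow> (nat \<Rightarrow> rat) \<Rightarrow> bool" where
  "F_sequence F A \<longleftrightarrow> (\<exists>f g h. unaryF F f \<and> unaryF F g \<and> unaryF F h \<and>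
     (\<forall>x. A x = (of_nat (f x) - of_nat (g x)) / (of_nat (h x) + 1)))"

definition F_computable :: "fclass \<Rightarrow> real \<Rightarrow> bool" where
  "F_computable F \<alpha> \<longleftrightarrow> (\<exists>A. F_sequence F A \<and>
     (\<forall>x. \<bar>real_of_rat (A x) - \<alpha>\<bar> \<le> 1 / (real x + 1)))"

end

theory Submission
  imports Defs
begin

text \<open>If \<open>x \<bar>A x - \<alpha>\<bar> \<le> M\<close> and \<open>K \<ge> M\<close> is a positive integer, then the subsequence
  \<open>x \<mapsto> A (K (x + 1))\<close> approximates \<open>\<alpha>\<close> within \<open>M / (K (x + 1)) \<le> 1 / (x + 1)\<close>.
  Since \<open>x \<mapsto> K (x + 1)\<close> is built from the successor, constants and multiplication,
  composing the numerator and denominator functions of \<open>A\<close> with it stays inside F,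
  so the subsequence is again an F-sequence.\<close>

lemma inF_compose:
  assumes "standard_conditions F" "inF F m f" "length gs = m" "\<forall>g\<in>set gs. inF F n g"
  shows "inF F n (\<lambda>xs. f (map (\<lambda>g. g xs) gs))"
  using assms unfolding standard_conditions_def by blast

lemma inF_compose_unary:
  assumes "standard_conditions F" "inF F 1 f" "inF F n p"
  shows "inF F n (\<lambda>xs. f [p xs])"
  using inF_compose[OF assms(1,2), of "[p]" n] assms(3) by simp

lemma inF_compose_binary:
  assumes "standard_conditions F" "inF F 2 f" "inF F n p" "inF F n q"
  shows "inF F n (\<lambda>xs. f [p xs, q xs])"
  using inF_compose[OF assms(1,2), of "[p, q]" n] assms(3,4) by simp

lemma unaryF_compose:
  assumes "standard_conditions F" "unaryF F f" "unaryF F p"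
  shows "unaryF F (\<lambda>x. f (p x))"
  using inF_compose_unary[OF assms(1), of "\<lambda>ys. f (ys ! 0)" 1 "\<lambda>xs. p (xs ! 0)"] assms(2,3)
  unfolding unaryF_def by simp

lemma unaryF_Suc:
  assumes "standard_conditions F"
  shows "unaryF F Suc"
  using assms unfolding standard_conditions_def unaryF_def by blast

lemma unaryF_const:
  assumes "standard_conditions F"
  shows "unaryF F (\<lambda>_. k)"
proof (induction k)
  case 0
  then show ?case using assms unfolding standard_conditions_def unaryF_def by simp
next
  case (Suc k)
  then show ?case using unaryF_compose[OF assms unaryF_Suc[OF assms]] by blast
qed

lemma unaryF_mult:
  assumes "standard_conditions F" "unaryF F p" "unaryF F q"
  shows "unaryF F (\<lambda>x. p x * q x)"
proof -
  have "inF F 2 (\<lambda>ys. ys ! 0 * ys ! 1)"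
    using assms(1) unfolding standard_conditions_def by blast
  from inF_compose_binary[OF assms(1) this] assms(2,3) show ?thesis
    unfolding unaryF_def by simp
qed

lemma F_sequence_compose:
  assumes "standard_conditions F" "F_sequence F A" "unaryF F p"
  shows "F_sequence F (\<lambda>x. A (p x))"
proof -
  obtain f g h where "unaryF F f" "unaryF F g" "unaryF F h"
    "\<And>x. A x = (of_nat (f x) - of_nat (g x)) / (of_nat (h x) + 1)"
    using assms(2) unfolding F_sequence_def by blast
  then show ?thesis
    using unaryF_compose[OF assms(1) _ assms(3)] unfolding F_sequence_def by blast
qed

lemma scaled_bound_imp_le_inverse_Suc:
  fixes d M :: real and K x :: nat
  assumes "real (K * Suc x) * d \<le> M" "M \<le> real K" "K > 0" "d \<ge> 0"
  shows "d \<le> 1 / (real x + 1)"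
proof -
  have "real K * ((real x + 1) * d) \<le> real K * 1"
    using assms(1,2) by (simp add: algebra_simps)
  then have "(real x + 1) * d \<le> 1"
    using assms(3) by simp
  then show ?thesis
    by (simp add: field_simps)
qed

theorem mainTheorem11:
  fixes F :: fclass and A :: "nat \<Rightarrow> rat" and \<alpha> :: real
  assumes "standard_conditions F"
    and "F_sequence F A"
    and "\<exists>M. \<forall>x. real x * \<bar>real_of_rat (A x) - \<alpha>\<bar> \<le> M"
  shows "F_computable F \<alpha>"
proof -
  obtain M where M: "\<And>x. real x * \<bar>real_of_rat (A x) - \<alpha>\<bar> \<le> M"
    using assms(3) by blast
  define K where "K = Suc (nat \<lceil>M\<rceil>)"
  have "M \<le> real K" "K > 0"
    unfolding K_def by linarith+
  have "unaryF F (\<lambda>x. K * Suc x)"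
    using unaryF_mult[OF assms(1) unaryF_const unaryF_Suc] assms(1) by blast
  then have "F_sequence F (\<lambda>x. A (K * Suc x))"
    by (rule F_sequence_compose[OF assms(1,2)])
  moreover have "\<bar>real_of_rat (A (K * Suc x)) - \<alpha>\<bar> \<le> 1 / (real x + 1)" for x
    using scaled_bound_imp_le_inverse_Suc[OF M \<open>M \<le> real K\<close> \<open>K > 0\<close>] by simp
  ultimately show ?thesis
    unfolding F_computable_def by blast
qed

end
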